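(* Let $u\in\mathcal H_k$ and let $\lambda_1,\lambda_2,\dots$ be selected from $\Lambda\subset\mathcal H_k'$ by a PDE-$\beta$-greedy algorithm with $\beta\in[0,\infty]$ applied to $u$, and let $r_i:=u-\Pi_{V(\Lambda_i)}(u)$. Then for $i=0,1,\dots$: (a) if $\beta\in[0,1]$: $$\sup_{\lambda\in\Lambda}|\lambda(r_i)| \le |\lambda_{i+1}(r_i)|^{\beta}\cdot P_{\Lambda_i}(\lambda_{i+1})^{1-\beta}\cdot\|r_i\|_{\mathcal H_k}^{1-\beta};$$ (b) if $\beta\in(1,\infty]$ (with $1/\infty:=0$): $$\sup_{\lambda\in\Lambda}|\lambda(r_i)| \le \frac{|\lambda_{i+1}(r_i)|}{P_{\Lambda_i}(\lambda_{i+1})^{1-1/\beta}}\cdot\sup_{\lambda\in\Lambda}P_{\Lambda_i}(\lambda)^{1-1/\beta}.$$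
   Context: $\mathcal H_k$ is the reproducing kernel Hilbert space of a kernel $k$; each $\lambda\in\mathcal H_k'$ has Riesz representer $v_\lambda$. For $\Lambda_i=\{\lambda_1,\dots,\lambda_i\}$ ($\Lambda_0=\emptyset$), $V(\Lambda_i)=\mathrm{span}\{v_\mu:\mu\in\Lambda_i\}$, $\Pi_{V(\Lambda_i)}$ the orthogonal projection, and $P_{\Lambda_i}(\lambda):=\|v_\lambda-\Pi_{V(\Lambda_i)}v_\lambda\|_{\mathcal H_k}$ the generalized power function. A PDE-$\beta$-greedy algorithm (for a set $\Lambda$ of functionals, e.g. $\Lambda=\{\delta_x\circ L:x\in\Omega\}\cup\{\delta_x:x\in\partial\Omega\}$) selects, for $\beta\in[0,\infty)$, $\lambda_{n+1}\in\arg\max_{\lambda\in\Lambda\setminus\Lambda_n,\ \lambda\neq0}|\lambda(u-\Pi_{V(\Lambda_n)}u)|^{\beta}\,P_{\Lambda_n}(\lambda)^{1-\beta}$, and for $\beta=\infty$, $\lambda_{n+1}\in\arg\max_{\lambda\in\Lambda\setminus\Lambda_n,\ \lambda\ne0}|\lambda(u-\Pi_{V(\Lambda_n)}u)|/P_{\Lambda_n}(\lambda)$ (maximizers assumed to exist). Special cases: $\beta=0$ PDE-$P$-greedy, $\beta=1/2$ PDE-$f\cdot P$-greedy, $\beta=1$ PDE-$f$-greedy, $\beta=\infty$ PDE-$f/P$-greedy. *)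

theory Defs
  imports "HOL-Analysis.Analysis"
begin

text \<open>The RKHS H_k is modelled as an abstract real Hilbert space 'h; every bounded
linear functional lambda is identified with its Riesz representer v_lambda, so that
lambda(f) = inner v_lambda f.  Sets of functionals are sets of representers.\<close>

definition orth_proj :: "'h::real_inner set \<Rightarrow> 'h \<Rightarrow> 'h" where
  "orth_proj S x = (THE p. p \<in> span S \<and> (\<forall>w\<in>span S. inner (x - p) w = 0))"

definition power_fun :: "'h::real_inner set \<Rightarrow> 'h \<Rightarrow> real" where
  "power_fun S v = norm (v - orth_proj S v)"

definition residual :: "'h::real_inner set \<Rightarrow> 'h \<Rightarrow> 'h" where
  "residual S u = u - orth_proj S u"

text \<open>Real power with the usual conventions x^0 = 1 (also for x = 0) and 0^a = 0 for a > 0.\<close>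
definition rpow :: "real \<Rightarrow> real \<Rightarrow> real" where
  "rpow x a = (if a = 0 then 1 else x powr a)"

definition sel :: "(nat \<Rightarrow> 'h) \<Rightarrow> nat \<Rightarrow> 'h set" where
  "sel lam n = lam ` {1..n}"

definition greedy_score :: "ereal \<Rightarrow> 'h::real_inner set \<Rightarrow> 'h \<Rightarrow> 'h \<Rightarrow> real" where
  "greedy_score \<beta> S u v =
     (if \<beta> = \<infinity> then \<bar>inner v (residual S u)\<bar> / power_fun S v
      else rpow \<bar>inner v (residual S u)\<bar> (real_of_ereal \<beta>)
           * rpow (power_fun S v) (1 - real_of_ereal \<beta>))"

definition greedy_step :: "'h::real_inner set \<Rightarrow> ereal \<Rightarrow> 'h \<Rightarrow> (nat \<Rightarrow> 'h) \<Rightarrow> nat \<Rightarrow> bool" where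
  "greedy_step \<Lambda> \<beta> u lam n \<longleftrightarrow>
     lam (Suc n) \<in> \<Lambda> - sel lam n \<and> lam (Suc n) \<noteq> 0 \<and>
     (\<forall>\<mu>\<in>\<Lambda> - sel lam n. \<mu> \<noteq> 0 \<longrightarrow>
        greedy_score \<beta> (sel lam n) u \<mu> \<le> greedy_score \<beta> (sel lam n) u (lam (Suc n)))"

end

theory Submission
  imports Defs
begin

text \<open>Write r for the residual and P for the power function.  Since r is orthogonal
  to the span of the selected representers, \<open>\<lambda>(r) = \<langle>v\<^sub>\<lambda> - \<Pi> v\<^sub>\<lambda>, r\<rangle>\<close>, so Cauchy-Schwarz
  gives |\<lambda>(r)| \<le> P(\<lambda>) \<parallel>r\<parallel>; and every \<lambda> with \<lambda>(r) \<noteq> 0 competes in the greedy selection.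
  For \<beta> \<le> 1 split |\<lambda>(r)| = |\<lambda>(r)|^\<beta> |\<lambda>(r)|^(1-\<beta>), bound the second factor by
  Cauchy-Schwarz and the score |\<lambda>(r)|^\<beta> P(\<lambda>)^(1-\<beta>) by maximality.  For \<beta> > 1 the score
  is the \<beta>-th power of |\<lambda>(r)| / P(\<lambda>)^(1-1/\<beta>), so maximality bounds this ratio directly.\<close>

lemma orth_proj_exists:
  fixes S :: "'h::real_inner set"
  assumes "finite S"
  shows "\<exists>p\<in>span S. \<forall>w\<in>span S. orthogonal (x - p) w"
  using assms
proof (induction S arbitrary: x rule: finite_induct)
  case empty
  then show ?case by (simp add: orthogonal_clauses)
next
  case (insert a T)
  obtain pa where pa: "pa \<in> span T" "\<forall>w\<in>span T. orthogonal (a - pa) w"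
    using insert.IH by blast
  obtain px where px: "px \<in> span T" "\<forall>w\<in>span T. orthogonal (x - px) w"
    using insert.IH by blast
  define a' where "a' = a - pa"
  define p where "p = px + (inner x a' / inner a' a') *\<^sub>R a'"
  have a'_orth: "orthogonal a' w" if "w \<in> span T" for w
    using pa that a'_def by blast
  have "p \<in> span (insert a T)"
    unfolding p_def a'_def
    by (meson pa(1) px(1) span_add span_base span_diff span_mono span_mul insertI1
        subset_insertI subsetD)
  moreover have "orthogonal (x - p) y" if "y \<in> insert a T" for y
  proof -
    have orth_T: "orthogonal (x - p) w" if "w \<in> span T" for w
      using px(2) a'_orth[OF that] that
      by (simp add: p_def orthogonal_def inner_diff_left inner_add_left)
    have "orthogonal (x - p) a'"
    proof (cases "a' = 0")
      case False
      have "inner px a' = 0"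
        using a'_orth[OF px(1)] by (simp add: orthogonal_def inner_commute)
      with False show ?thesis
        by (simp add: p_def orthogonal_def inner_diff_left inner_add_left)
    qed (simp add: orthogonal_clauses)
    then have "orthogonal (x - p) a"
      using orth_T[OF pa(1)] a'_def by (metis diff_add_cancel orthogonal_clauses(4))
    then show ?thesis
      using that orth_T span_base by blast
  qed
  ultimately show ?case
    by (meson orthogonal_to_span)
qed

lemma orth_proj_characterization:
  fixes S :: "'h::real_inner set"
  assumes "finite S"
  shows "orth_proj S x \<in> span S \<and> (\<forall>w\<in>span S. inner (x - orth_proj S x) w = 0)"
  unfolding orth_proj_def
proof (rule theI')
  show "\<exists>!p. p \<in> span S \<and> (\<forall>w\<in>span S. inner (x - p) w = 0)"
  proof (rule ex_ex1I)
    show "\<exists>p. p \<in> span S \<and> (\<forall>w\<in>span S. inner (x - p) w = 0)"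
      using orth_proj_exists[OF assms] by (auto simp: orthogonal_def)
  next
    fix p q
    assume p: "p \<in> span S \<and> (\<forall>w\<in>span S. inner (x - p) w = 0)"
      and q: "q \<in> span S \<and> (\<forall>w\<in>span S. inner (x - q) w = 0)"
    then have "inner (x - p) (p - q) = 0" "inner (x - q) (p - q) = 0"
      using span_diff by blast+
    then have "inner (p - q) (p - q) = 0"
      by (simp add: inner_diff_left)
    then show "p = q" by simp
  qed
qed

lemma inner_span_residual_eq_0:
  fixes S :: "'h::real_inner set"
  assumes "finite S" "w \<in> span S"
  shows "inner w (residual S u) = 0"
  using orth_proj_characterization[OF assms(1), of u] assms(2)
  by (simp add: residual_def inner_commute)

lemma abs_inner_residual_le_power_fun:
  fixes S :: "'h::real_inner set"
  assumes "finite S"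
  shows "\<bar>inner \<mu> (residual S u)\<bar> \<le> power_fun S \<mu> * norm (residual S u)"
proof -
  have "inner (orth_proj S \<mu>) (residual S u) = 0"
    using inner_span_residual_eq_0[OF assms] orth_proj_characterization[OF assms] by blast
  then have "inner \<mu> (residual S u) = inner (\<mu> - orth_proj S \<mu>) (residual S u)"
    by (simp add: inner_diff_left)
  then show ?thesis
    unfolding power_fun_def by (metis Cauchy_Schwarz_ineq2)
qed

lemma finite_sel: "finite (sel lam n)"
  by (simp add: sel_def)

lemma greedy_step_score_le:
  fixes \<Lambda> :: "'h::real_inner set"
  assumes "greedy_step \<Lambda> \<beta> u lam n" "\<mu> \<in> \<Lambda>" "inner \<mu> (residual (sel lam n) u) \<noteq> 0"
  shows "greedy_score \<beta> (sel lam n) u \<mu> \<le> greedy_score \<beta> (sel lam n) u (lam (Suc n))"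
proof -
  have "\<mu> \<notin> sel lam n" "\<mu> \<noteq> 0"
    using assms(3) inner_span_residual_eq_0[OF finite_sel span_base] by auto
  with assms(1,2) show ?thesis
    unfolding greedy_step_def by blast
qed

lemma rpow_nonneg: "0 \<le> rpow x a"
  by (simp add: rpow_def)

lemma rpow_mult: "rpow (x * y) a = rpow x a * rpow y a"
  by (simp add: rpow_def powr_mult)

lemma rpow_mono: "0 \<le> x \<Longrightarrow> x \<le> y \<Longrightarrow> 0 \<le> a \<Longrightarrow> rpow x a \<le> rpow y a"
  by (auto simp: rpow_def intro: powr_mono2)

lemma rpow_mult_rpow_one_minus: "0 \<le> x \<Longrightarrow> b \<le> 1 \<Longrightarrow> rpow x b * rpow x (1 - b) = x"
  by (auto simp: rpow_def powr_add[symmetric])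

lemma le_of_interpolated_score_le:
  fixes a p R b K :: real
  assumes "0 \<le> b" "b \<le> 1" "0 \<le> a" "a \<le> p * R"
    and "rpow a b * rpow p (1 - b) \<le> K"
  shows "a \<le> K * rpow R (1 - b)"
proof -
  have "a = rpow a b * rpow a (1 - b)"
    using assms(2,3) by (simp add: rpow_mult_rpow_one_minus)
  also have "\<dots> \<le> rpow a b * rpow (p * R) (1 - b)"
    using assms(2-4) by (intro mult_left_mono rpow_mono rpow_nonneg) auto
  also have "\<dots> = (rpow a b * rpow p (1 - b)) * rpow R (1 - b)"
    by (simp add: rpow_mult)
  also have "\<dots> \<le> K * rpow R (1 - b)"
    using assms(5) by (intro mult_right_mono rpow_nonneg)
  finally show ?thesis .
qed

text \<open>Both sides of the score inequality are \<open>b\<close>-th powers of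
  \<open>a / p\<^sup>e\<close> with \<open>e = 1 - 1/b\<close>; the case \<open>p' = 0\<close> is harmless because then
  the right-hand side of the hypothesis vanishes.\<close>

lemma le_ratio_powr_of_score_le:
  fixes a p a' p' b :: real
  assumes b: "1 < b" and "0 \<le> a" "0 < p" "0 \<le> a'"
    and score: "a powr b * p powr (1 - b) \<le> a' powr b * p' powr (1 - b)"
  shows "a \<le> a' / p' powr (1 - 1 / b) * p powr (1 - 1 / b)"
proof -
  define e where "e = 1 - 1 / b"
  define X where "X = a * p powr (- e)"
  define Y where "Y = a' * p' powr (- e)"
  have exponent: "- (e * b) = 1 - b"
    unfolding e_def using b by (simp add: field_simps)
  have "X powr b \<le> Y powr b"
    using score by (simp add: X_def Y_def powr_mult powr_powr exponent)
  moreover have "0 \<le> Y"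
    unfolding Y_def using \<open>0 \<le> a'\<close> by simp
  ultimately have "X \<le> Y"
    using b by (meson not_le powr_less_mono2 zero_less_one less_trans)
  have "a = X * p powr e"
    unfolding X_def using \<open>0 < p\<close> by (simp add: powr_add[symmetric])
  also have "\<dots> \<le> Y * p powr e"
    using \<open>X \<le> Y\<close> by (intro mult_right_mono) auto
  also have "Y = a' / p' powr e"
    unfolding Y_def by (simp add: powr_minus divide_inverse)
  finally show ?thesis
    unfolding e_def .
qed

lemma SUP_ereal_le_mult_SUP:
  assumes "0 \<le> c" "\<And>x. x \<in> A \<Longrightarrow> f x \<le> c * g x"
  shows "(SUP x\<in>A. ereal (f x)) \<le> ereal c * (SUP x\<in>A. ereal (g x))"
proof (rule SUP_least)
  fix x
  assume "x \<in> A"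
  then have "ereal (f x) \<le> ereal c * ereal (g x)"
    using assms(2) by simp
  also have "\<dots> \<le> ereal c * (SUP x\<in>A. ereal (g x))"
    using assms(1) \<open>x \<in> A\<close> by (intro ereal_mult_left_mono SUP_upper) auto
  finally show "ereal (f x) \<le> ereal c * (SUP x\<in>A. ereal (g x))" .
qed

lemma greedy_residual_bound_le_one:
  fixes \<Lambda> :: "'h::real_inner set"
  assumes greedy: "greedy_step \<Lambda> (ereal b) u lam i" and "0 \<le> b" "b \<le> 1"
  defines "r \<equiv> residual (sel lam i) u" and "l \<equiv> lam (Suc i)"
  shows "(SUP \<mu>\<in>\<Lambda>. ereal \<bar>inner \<mu> r\<bar>)
           \<le> ereal (rpow \<bar>inner l r\<bar> b * rpow (power_fun (sel lam i) l) (1 - b)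
                    * rpow (norm r) (1 - b))"
proof (rule SUP_least)
  fix \<mu>
  assume "\<mu> \<in> \<Lambda>"
  have "\<bar>inner \<mu> r\<bar> \<le> rpow \<bar>inner l r\<bar> b * rpow (power_fun (sel lam i) l) (1 - b)
                       * rpow (norm r) (1 - b)"
  proof (cases "inner \<mu> r = 0")
    case False
    show ?thesis
    proof (rule le_of_interpolated_score_le)
      show "\<bar>inner \<mu> r\<bar> \<le> power_fun (sel lam i) \<mu> * norm r"
        unfolding r_def by (rule abs_inner_residual_le_power_fun[OF finite_sel])
      show "rpow \<bar>inner \<mu> r\<bar> b * rpow (power_fun (sel lam i) \<mu>) (1 - b)
              \<le> rpow \<bar>inner l r\<bar> b * rpow (power_fun (sel lam i) l) (1 - b)"
        using greedy_step_score_le[OF greedy \<open>\<mu> \<in> \<Lambda>\<close>] False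
        by (simp add: greedy_score_def r_def l_def)
    qed (use assms(2,3) in auto)
  qed (simp add: rpow_nonneg)
  then show "ereal \<bar>inner \<mu> r\<bar> \<le> ereal (rpow \<bar>inner l r\<bar> b
      * rpow (power_fun (sel lam i) l) (1 - b) * rpow (norm r) (1 - b))"
    by simp
qed

lemma greedy_residual_pointwise_bound_gt_one:
  fixes \<Lambda> :: "'h::real_inner set"
  assumes greedy: "greedy_step \<Lambda> \<beta> u lam i" and "1 < \<beta>" and "\<mu> \<in> \<Lambda>"
  defines "e \<equiv> (if \<beta> = \<infinity> then 1 else 1 - 1 / real_of_ereal \<beta>)"
    and "r \<equiv> residual (sel lam i) u" and "P \<equiv> power_fun (sel lam i)" and "l \<equiv> lam (Suc i)"
  shows "\<bar>inner \<mu> r\<bar> \<le> \<bar>inner l r\<bar> / rpow (P l) e * rpow (P \<mu>) e"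
proof (cases "inner \<mu> r = 0")
  case False
  have "\<bar>inner \<mu> r\<bar> \<le> P \<mu> * norm r"
    unfolding r_def P_def by (rule abs_inner_residual_le_power_fun[OF finite_sel])
  with False have "0 < P \<mu> * norm r"
    by (meson zero_less_abs_iff order_less_le_trans)
  then have P\<mu>: "0 < P \<mu>"
    by (simp add: zero_less_mult_iff P_def power_fun_def)
  have score: "greedy_score \<beta> (sel lam i) u \<mu> \<le> greedy_score \<beta> (sel lam i) u l"
    using greedy_step_score_le[OF greedy \<open>\<mu> \<in> \<Lambda>\<close>] False by (simp add: r_def l_def)
  show ?thesis
  proof (cases "\<beta> = \<infinity>")
    case True
    then have "\<bar>inner \<mu> r\<bar> / P \<mu> \<le> \<bar>inner l r\<bar> / P l"
      using score by (simp add: greedy_score_def r_def P_def)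
    then have "\<bar>inner \<mu> r\<bar> \<le> \<bar>inner l r\<bar> / P l * P \<mu>"
      using P\<mu> by (simp add: divide_le_eq)
    then show ?thesis
      using True P\<mu> by (simp add: e_def rpow_def P_def power_fun_def)
  next
    case False
    then obtain b where \<beta>: "\<beta> = ereal b" and "1 < b"
      using \<open>1 < \<beta>\<close> by (cases \<beta>) auto
    with score have "\<bar>inner \<mu> r\<bar> powr b * P \<mu> powr (1 - b)
                       \<le> \<bar>inner l r\<bar> powr b * P l powr (1 - b)"
      by (simp add: greedy_score_def rpow_def r_def P_def)
    then have "\<bar>inner \<mu> r\<bar> \<le> \<bar>inner l r\<bar> / P l powr (1 - 1 / b) * P \<mu> powr (1 - 1 / b)"
      using \<open>1 < b\<close> P\<mu> by (intro le_ratio_powr_of_score_le) auto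
    then show ?thesis
      using \<open>1 < b\<close> by (simp add: e_def \<beta> rpow_def)
  qed
qed (simp add: rpow_nonneg)

theorem lemma4p5:
  fixes \<Lambda> :: "'h::{real_inner, complete_space} set"
    and u :: 'h and lam :: "nat \<Rightarrow> 'h" and \<beta> :: ereal and i :: nat
  assumes beta_nonneg: "0 \<le> \<beta>"
    and greedy: "\<forall>n\<le>i. greedy_step \<Lambda> \<beta> u lam n"
  shows "(\<beta> \<le> 1 \<longrightarrow>
           (SUP \<mu>\<in>\<Lambda>. ereal \<bar>inner \<mu> (residual (sel lam i) u)\<bar>)
             \<le> ereal (rpow \<bar>inner (lam (Suc i)) (residual (sel lam i) u)\<bar> (real_of_ereal \<beta>)
                      * rpow (power_fun (sel lam i) (lam (Suc i))) (1 - real_of_ereal \<beta>)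
                      * rpow (norm (residual (sel lam i) u)) (1 - real_of_ereal \<beta>)))
       \<and> (1 < \<beta> \<longrightarrow>
           (let e = (if \<beta> = \<infinity> then 1 else 1 - 1 / real_of_ereal \<beta>) in
            (SUP \<mu>\<in>\<Lambda>. ereal \<bar>inner \<mu> (residual (sel lam i) u)\<bar>)
             \<le> ereal (\<bar>inner (lam (Suc i)) (residual (sel lam i) u)\<bar>
                      / rpow (power_fun (sel lam i) (lam (Suc i))) e)
               * (SUP \<mu>\<in>\<Lambda>. ereal (rpow (power_fun (sel lam i) \<mu>) e))))"
proof -
  have step: "greedy_step \<Lambda> \<beta> u lam i"
    using greedy by simp
  have real_beta: "\<beta> = ereal (real_of_ereal \<beta>)" "0 \<le> real_of_ereal \<beta>"
    "real_of_ereal \<beta> \<le> 1" if "\<beta> \<le> 1"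
    using that beta_nonneg by (cases \<beta>; simp)+
  show ?thesis
    unfolding Let_def
    apply (intro conjI impI)
    subgoal
      using greedy_residual_bound_le_one[of \<Lambda> "real_of_ereal \<beta>" u lam i] step real_beta
      by simp
    subgoal
      by (intro SUP_ereal_le_mult_SUP greedy_residual_pointwise_bound_gt_one[OF step])
        (auto intro: divide_nonneg_nonneg rpow_nonneg)
    done
qed

end
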